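(* Let $D$ be a squarefree integer, not a perfect square, with $3\mid D$, and let $A,B\in\mathbb{Z}$ be such that $S^{(D;A,B)}$ is smooth, $A\equiv -D\pmod 9$ and $B\equiv 0\pmod 9$. Then $S^{(D;A,B)}(\mathbb{Q}_3)\neq\emptyset$, and $\mathrm{ev}_{\alpha,3}(\mathbf{t})=0$ for every $\mathbf{t}\in S^{(D;A,B)}(\mathbb{Q}_3)$.
   Context: $S^{(D;A,B)}\subset\mathbb{P}^4_{\mathbb{Q}}$ is defined by $t_0t_1=t_2^2-Dt_3^2$ and $(t_0+At_1)(t_0+Bt_1)=t_2^2-Dt_4^2$; smooth iff $AB\neq0$, $A\neq B$, $A^2-2AB+B^2-2A-2B+1\neq0$. For smooth such a surface, a place $v$ and $\mathbf{t}\in S(\mathbb{Q}_v)$, at least one of $t_0/(t_0+At_1)$, $t_1/(t_0+At_1)$, $t_0/(t_0+Bt_1)$, $t_1/(t_0+Bt_1)$ is defined and nonzero at $\mathbf{t}$; for such $q$, $\mathrm{ev}_{\alpha,v}(\mathbf{t})=0$ if the Hilbert symbol $(q,D)_v=1$ and $1/2$ otherwise, independently of the choice of $q$. *)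

theory Defs
  imports Complex_Main "HOL-Computational_Algebra.Squarefree"
begin

text \<open>A 3-adic integer is a compatible sequence of residues x n in {0..<3^n}.
  Ring operations are computed componentwise modulo 3^n.\<close>

type_synonym zp = "nat \<Rightarrow> int"

definition Zp3 :: "zp set" where
  "Zp3 = {x. \<forall>n. 0 \<le> x n \<and> x n < 3 ^ n \<and> x (Suc n) mod 3 ^ n = x n}"

definition zp_of_int :: "int \<Rightarrow> zp" where
  "zp_of_int c = (\<lambda>n. c mod 3 ^ n)"

definition zp_zero :: zp where "zp_zero = zp_of_int 0"

definition zp_add :: "zp \<Rightarrow> zp \<Rightarrow> zp" where
  "zp_add x y = (\<lambda>n. (x n + y n) mod 3 ^ n)"

definition zp_neg :: "zp \<Rightarrow> zp" where
  "zp_neg x = (\<lambda>n. (- x n) mod 3 ^ n)"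

definition zp_mul :: "zp \<Rightarrow> zp \<Rightarrow> zp" where
  "zp_mul x y = (\<lambda>n. (x n * y n) mod 3 ^ n)"

text \<open>An element of Q_3 is represented by a pair (a, b) with a, b in Z_3, b nonzero,
  standing for a/b; equality is cross-multiplication.\<close>

type_synonym qp = "zp \<times> zp"

definition Q3 :: "qp set" where
  "Q3 = {(a, b). a \<in> Zp3 \<and> b \<in> Zp3 \<and> b \<noteq> zp_zero}"

definition q3_eq :: "qp \<Rightarrow> qp \<Rightarrow> bool" where
  "q3_eq x y = (zp_mul (fst x) (snd y) = zp_mul (fst y) (snd x))"

definition q3_add :: "qp \<Rightarrow> qp \<Rightarrow> qp" where
  "q3_add x y = (zp_add (zp_mul (fst x) (snd y)) (zp_mul (fst y) (snd x)), zp_mul (snd x) (snd y))"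

definition q3_mul :: "qp \<Rightarrow> qp \<Rightarrow> qp" where
  "q3_mul x y = (zp_mul (fst x) (fst y), zp_mul (snd x) (snd y))"

definition q3_of_zp :: "zp \<Rightarrow> qp" where
  "q3_of_zp a = (a, zp_of_int 1)"

definition q3_zero :: qp where "q3_zero = q3_of_zp zp_zero"

definition hilbert3 :: "qp \<Rightarrow> qp \<Rightarrow> int" where
  "hilbert3 a b =
     (if \<exists>x\<in>Q3. \<exists>y\<in>Q3. \<exists>z\<in>Q3.
            \<not> (q3_eq x q3_zero \<and> q3_eq y q3_zero \<and> q3_eq z q3_zero) \<and>
            q3_eq (q3_mul z z) (q3_add (q3_mul a (q3_mul x x)) (q3_mul b (q3_mul y y)))
      then 1 else -1)"

definition smooth_S :: "int \<Rightarrow> int \<Rightarrow> bool" where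
  "smooth_S A B \<longleftrightarrow> A * B \<noteq> 0 \<and> A \<noteq> B \<and> A^2 - 2*A*B + B^2 - 2*A - 2*B + 1 \<noteq> 0"

text \<open>A point of S(Q_3) is represented by homogeneous coordinates t 0, ..., t 4 in Z_3,
  not all zero (every point of P^4(Q_3) has such representatives).\<close>

definition in_S3 :: "int \<Rightarrow> int \<Rightarrow> int \<Rightarrow> (nat \<Rightarrow> zp) \<Rightarrow> bool" where
  "in_S3 D A B t \<longleftrightarrow>
     (\<forall>i\<le>4. t i \<in> Zp3) \<and> (\<exists>i\<le>4. t i \<noteq> zp_zero) \<and>
     zp_mul (t 0) (t 1) =
       zp_add (zp_mul (t 2) (t 2)) (zp_neg (zp_mul (zp_of_int D) (zp_mul (t 3) (t 3)))) \<and>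
     zp_mul (zp_add (t 0) (zp_mul (zp_of_int A) (t 1))) (zp_add (t 0) (zp_mul (zp_of_int B) (t 1))) =
       zp_add (zp_mul (t 2) (t 2)) (zp_neg (zp_mul (zp_of_int D) (zp_mul (t 4) (t 4))))"

definition q_cands :: "int \<Rightarrow> int \<Rightarrow> (nat \<Rightarrow> zp) \<Rightarrow> qp list" where
  "q_cands A B t =
     [(t 0, zp_add (t 0) (zp_mul (zp_of_int A) (t 1))),
      (t 1, zp_add (t 0) (zp_mul (zp_of_int A) (t 1))),
      (t 0, zp_add (t 0) (zp_mul (zp_of_int B) (t 1))),
      (t 1, zp_add (t 0) (zp_mul (zp_of_int B) (t 1)))]"

definition q_admissible :: "int \<Rightarrow> int \<Rightarrow> (nat \<Rightarrow> zp) \<Rightarrow> qp \<Rightarrow> bool" where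
  "q_admissible A B t q \<longleftrightarrow> q \<in> set (q_cands A B t) \<and> snd q \<noteq> zp_zero \<and> fst q \<noteq> zp_zero"

definition ev_alpha3 :: "int \<Rightarrow> int \<Rightarrow> int \<Rightarrow> (nat \<Rightarrow> zp) \<Rightarrow> real" where
  "ev_alpha3 D A B t =
     (let q = (SOME q. q_admissible A B t q)
      in if hilbert3 q (q3_of_zp (zp_of_int D)) = 1 then 0 else 1/2)"

end

(*
  Write D = 3d with 3 not dividing d. On nonzero 3-adic integers the Hilbert symbol (x, D)_3 is the
  character chi(3^k u) = (u/3) (-d/3)^k, and chi(x) = 1 exactly when x is a norm X^2 - D Y^2
  (Hensel's lemma extracts the square root).  On a point of S one has t1 <> 0, and the two
  defining equations say that t0 t1 and (t0 + A t1)(t0 + B t1) are norms, so chi(t0) = chi(t1) and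
  chi(t0 + A t1) = chi(t0 + B t1) whenever these are nonzero.  Since A = 3a with a = -d (mod 3),
  chi(A) = 1, and comparing valuations shows that t0 + A t1 or, using 9 | B, t0 + B t1 has the
  character of t1.  Hence every admissible quotient q has chi(q) = 1, i.e. (q, D)_3 = 1.
  The point (1 : 1 : 1 : 0 : s) lies on S for a suitable 3-adic unit s, again by Hensel's lemma.
*)

theory Submission
  imports Defs
begin

lemma Zp3_mod_self: "x \<in> Zp3 \<Longrightarrow> x n mod 3^n = x n"
  by (simp add: Zp3_def)

lemma Zp3_at_0: "x \<in> Zp3 \<Longrightarrow> x 0 = 0"
  using Zp3_mod_self[of x 0] by simp

lemma Zp3_Suc_mod: "x \<in> Zp3 \<Longrightarrow> x (Suc n) mod 3^n = x n mod 3^n"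
  by (simp add: Zp3_def)

lemma Zp3_bounds: "x \<in> Zp3 \<Longrightarrow> 0 \<le> x n \<and> x n < 3^n"
  by (simp add: Zp3_def)

lemma Zp3_mod_le:
  assumes "x \<in> Zp3" "m \<le> n"
  shows "x n mod 3^m = x m"
  using assms(2)
proof (induction n rule: dec_induct)
  case base
  show ?case using Zp3_mod_self[OF assms(1)] .
next
  case (step n)
  have "x (Suc n) mod 3^m = (x (Suc n) mod 3^n) mod 3^m"
    using step(1) by (simp add: mod_mod_cancel le_imp_power_dvd)
  also have "\<dots> = x n mod 3^m" using Zp3_Suc_mod[OF assms(1)] Zp3_mod_self[OF assms(1)] by simp
  finally show ?case using step.IH by simp
qed

lemma Zp3_I:
  assumes "\<And>n. 0 \<le> x n" "\<And>n. x n < 3^n" "\<And>n. x (Suc n) mod 3^n = x n"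
  shows "x \<in> Zp3"
  using assms by (simp add: Zp3_def)

lemma Zp3_of_mod_compatible:
  assumes "\<And>n. x n = f n mod 3^n" "\<And>n. f (Suc n) mod 3^n = f n mod 3^n"
  shows "x \<in> Zp3"
proof (rule Zp3_I)
  fix n
  show "0 \<le> x n" "x n < 3^n" using assms(1) by auto
  have "x (Suc n) mod 3^n = f (Suc n) mod 3^n"
    using assms(1) by (simp add: mod_mod_cancel)
  then show "x (Suc n) mod 3^n = x n" using assms by simp
qed

lemma zp_of_int_in_Zp3 [simp]: "zp_of_int c \<in> Zp3"
  by (rule Zp3_of_mod_compatible[of _ "\<lambda>n. c"]) (auto simp: zp_of_int_def)

lemma zp_zero_in_Zp3 [simp]: "zp_zero \<in> Zp3"
  by (simp add: zp_zero_def)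

lemma zp_zero_apply [simp]: "zp_zero n = 0"
  by (simp add: zp_zero_def zp_of_int_def)

lemma zp_add_in_Zp3 [simp]: "x \<in> Zp3 \<Longrightarrow> y \<in> Zp3 \<Longrightarrow> zp_add x y \<in> Zp3"
  by (rule Zp3_of_mod_compatible[of _ "\<lambda>n. x n + y n"])
    (simp add: zp_add_def, rule mod_add_cong, simp_all add: Zp3_Suc_mod)

lemma zp_mul_in_Zp3 [simp]: "x \<in> Zp3 \<Longrightarrow> y \<in> Zp3 \<Longrightarrow> zp_mul x y \<in> Zp3"
  by (rule Zp3_of_mod_compatible[of _ "\<lambda>n. x n * y n"])
    (simp add: zp_mul_def, rule mod_mult_cong, simp_all add: Zp3_Suc_mod)

lemma zp_neg_in_Zp3 [simp]: "x \<in> Zp3 \<Longrightarrow> zp_neg x \<in> Zp3"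
  by (rule Zp3_of_mod_compatible[of _ "\<lambda>n. - x n"])
    (simp add: zp_neg_def, rule mod_minus_cong, simp_all add: Zp3_Suc_mod)

lemma zp_add_zero_left [simp]: "y \<in> Zp3 \<Longrightarrow> zp_add zp_zero y = y"
  by (rule ext) (simp add: zp_add_def Zp3_mod_self)

lemma zp_add_zero_right [simp]: "y \<in> Zp3 \<Longrightarrow> zp_add y zp_zero = y"
  by (rule ext) (simp add: zp_add_def Zp3_mod_self)

lemma zp_mul_zero_left [simp]: "zp_mul zp_zero y = zp_zero"
  by (rule ext) (simp add: zp_mul_def)

lemma zp_mul_zero_right [simp]: "zp_mul y zp_zero = zp_zero"
  by (rule ext) (simp add: zp_mul_def)

lemma zp_neg_zero [simp]: "zp_neg zp_zero = zp_zero"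
  by (rule ext) (simp add: zp_neg_def)

lemma zp_mul_one_right: "x \<in> Zp3 \<Longrightarrow> zp_mul x (zp_of_int 1) = x"
  by (rule ext) (simp add: zp_mul_def zp_of_int_def mod_mult_right_eq Zp3_mod_self)

lemma zp_add_commute: "zp_add x y = zp_add y x"
  by (rule ext) (simp add: zp_add_def add.commute)

lemma zp_one_nonzero: "zp_of_int 1 \<noteq> zp_zero"
proof
  assume "zp_of_int 1 = zp_zero"
  then have "zp_of_int 1 1 = zp_zero 1" by simp
  then show False by (simp add: zp_of_int_def)
qed

lemma Zp3_nonzero_at_Suc:
  assumes "x \<in> Zp3" "x \<noteq> zp_zero"
  obtains k where "x (Suc k) \<noteq> 0"
proof -
  obtain m where "x m \<noteq> 0" using assms(2) by (auto simp: fun_eq_iff)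
  then show ?thesis using that Zp3_at_0[OF assms(1)] by (cases m) auto
qed

lemma power2_mod3_eq_1: fixes u :: int assumes "\<not> 3 dvd u" shows "u^2 mod 3 = 1"
proof -
  have "u mod 3 = 1 \<or> u mod 3 = 2" using assms by presburger
  moreover have "u^2 mod 3 = (u mod 3)^2 mod 3" by (simp add: power_mod)
  ultimately show ?thesis by auto
qed

lemma coprime_power3: fixes u :: int assumes "\<not> 3 dvd u" shows "coprime (3^n) u"
  using assms prime_imp_coprime[of "3::int" u] by simp

lemma not_3_dvd_mult: fixes u w :: int assumes "\<not> 3 dvd u" "\<not> 3 dvd w" shows "\<not> 3 dvd u * w"
  using assms coprime_dvd_mult_left_iff[OF coprime_power3[OF assms(2), of 1]] by simp

lemma not_3_dvd_power: fixes u :: int assumes "\<not> 3 dvd u" shows "\<not> 3 dvd u^k"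
  by (induction k) (simp_all add: not_3_dvd_mult[OF assms])

lemma even_power_mod3: fixes u :: int assumes "\<not> 3 dvd u" shows "u^(2*j) mod 3 = 1"
proof -
  have "u^(2*j) mod 3 = ((u^2) mod 3)^j mod 3" by (simp add: power_mult power_mod)
  then show ?thesis using power2_mod3_eq_1[OF assms] by simp
qed

lemma unit_mod3_inverse_eq:
  fixes a b :: int assumes "a = 1 \<or> a = 2" "b = 1 \<or> b = 2" "(a * b) mod 3 = 1"
  shows "a = b"
  using assms by auto

subsection \<open>Hensel lifting of square roots\<close>

lemma square_lift_step:
  fixes e c x :: int
  assumes e: "\<not> 3 dvd e" and n: "n \<ge> 1" and x: "x mod 3 = 1" "0 \<le> x" "x < 3^n"
    and sq: "(e * x^2) mod 3^n = c mod 3^n"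
  obtains y where "y mod 3 = 1" "0 \<le> y" "y < 3^Suc n" "(e * y^2) mod 3^Suc n = c mod 3^Suc n"
proof -
  obtain r where r: "e * x^2 - c = 3^n * r"
    using sq by (metis mod_eq_dvd_iff dvd_def)
  define w where "w = 2 * e * x"
  have "\<not> 3 dvd 2 * x" using x(1) by presburger
  then have "\<not> 3 dvd e * (2 * x)" by (rule not_3_dvd_mult[OF e])
  then have w3: "\<not> 3 dvd w" by (simp add: w_def ac_simps)
  \<comment> \<open>Newton step: correct \<open>x\<close> by \<open>j 3^n\<close> with \<open>j \<equiv> -r w \<equiv> -r / w (mod 3)\<close>, as \<open>w\<^sup>2 \<equiv> 1\<close>.\<close>
  define j where "j = (- r * w) mod 3"
  define y where "y = x + j * 3^n"
  have "3 dvd 1 - w^2" using power2_mod3_eq_1[OF w3] by (simp add: mod_eq_dvd_iff[symmetric])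
  moreover have "j mod 3 = (- r * w) mod 3" by (simp add: j_def)
  then have "3 dvd j + r * w" by (simp add: mod_eq_dvd_iff)
  moreover have "r + w * j = r * (1 - w^2) + w * (j + r * w)"
    by (simp add: algebra_simps power2_eq_square)
  ultimately have "3 dvd r + w * j" by (metis dvd_add dvd_mult)
  moreover have "(3::int) dvd 3^n" using n by simp
  ultimately have "3 dvd r + w * j + e * j^2 * 3^n" by simp
  moreover have "e * y^2 - c = 3^n * (r + w * j + e * j^2 * 3^n)"
    unfolding y_def w_def using r by (simp add: algebra_simps power2_eq_square)
  ultimately have "3^Suc n dvd e * y^2 - c" by (simp add: mult_dvd_mono)
  then have "(e * y^2) mod 3^Suc n = c mod 3^Suc n" by (simp add: mod_eq_dvd_iff)
  moreover have "y mod 3 = 1"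
    using x(1) mod_add_eq[of x 3 "j * 3^n"] \<open>3 dvd 3^n\<close> unfolding y_def by simp
  moreover have "0 \<le> y \<and> y < 3^Suc n"
  proof -
    have "0 \<le> j * 3^n" "j * 3^n \<le> 2 * 3^n" by (simp_all add: j_def mult_right_mono)
    then show ?thesis using x(2,3) unfolding y_def power_Suc by linarith
  qed
  ultimately show ?thesis using that by blast
qed

lemma square_root_mod_unique:
  fixes e x y :: int
  assumes e: "\<not> 3 dvd e" and "x mod 3 = 1" "y mod 3 = 1"
    and "0 \<le> x" "x < 3^n" "0 \<le> y" "y < 3^n"
    and sq: "(e * x^2) mod 3^n = (e * y^2) mod 3^n"
  shows "x = y"
proof -
  have "3^n dvd (x - y) * (e * (x + y))"
    using sq by (simp add: mod_eq_dvd_iff algebra_simps power2_eq_square)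
  moreover have "\<not> 3 dvd x + y" using assms(2,3) by presburger
  then have "coprime (3^n) (e * (x + y))" using coprime_power3 not_3_dvd_mult[OF e] by blast
  ultimately have "3^n dvd x - y" by (metis coprime_dvd_mult_left_iff)
  moreover have "\<bar>x - y\<bar> < 3^n" using assms(4-7) by auto
  ultimately show ?thesis using dvd_imp_le_int[of "x - y" "3^n"] by fastforce
qed

lemma hensel_square_root:
  fixes e :: int and f :: "nat \<Rightarrow> int"
  assumes e: "\<not> 3 dvd e" and f: "\<And>n. f (Suc n) mod 3^n = f n mod 3^n"
    and f1: "f 1 mod 3 = e mod 3"
  obtains s where "s \<in> Zp3" "\<And>n. (e * s n ^ 2) mod 3^n = f n mod 3^n" "\<And>n. n \<ge> 1 \<Longrightarrow> s n mod 3 = 1"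
proof -
  define root where
    "root n x \<longleftrightarrow> 0 \<le> x \<and> x < 3^n \<and> (e * x^2) mod 3^n = f n mod 3^n \<and> x mod 3 = 1" for n x
  have ex: "\<exists>x. root n x" if "n \<ge> 1" for n
    using that
  proof (induction n rule: dec_induct)
    case base
    show ?case using f1 by (intro exI[of _ 1]) (simp add: root_def)
  next
    case (step n)
    then obtain x where x: "root n x" by blast
    then have x': "x mod 3 = 1" "0 \<le> x" "x < 3^n" "(e * x^2) mod 3^n = f (Suc n) mod 3^n"
      using f[of n] by (simp_all add: root_def)
    obtain y where "y mod 3 = 1" "0 \<le> y" "y < 3^Suc n"
      "(e * y^2) mod 3^Suc n = f (Suc n) mod 3^Suc n"
      using square_lift_step[OF e step(1) x'] by blast
    then have "root (Suc n) y" by (simp add: root_def)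
    then show ?case by blast
  qed
  have unique: "x = y" if "n \<ge> 1" "root n x" "root n y" for n x y
    using that square_root_mod_unique[OF e, of x y n] unfolding root_def by auto
  define s where "s n = (if n = 0 then 0 else THE x. root n x)" for n
  have s_root: "root n (s n)" if "n \<ge> 1" for n
    using theI'[of "root n"] ex[OF that] unique[OF that] that unfolding s_def by auto
  have "s \<in> Zp3"
  proof (rule Zp3_I)
    fix n
    show "0 \<le> s n" "s n < 3^n" using s_root[of n] by (cases "n = 0"; auto simp: s_def root_def)+
    show "s (Suc n) mod 3^n = s n"
    proof (cases "n = 0")
      case True then show ?thesis by (simp add: s_def)
    next
      case False
      then have n: "n \<ge> 1" by simp
      let ?z = "s (Suc n) mod 3^n"
      have "?z^2 mod 3^n = s (Suc n)^2 mod 3^n" by (simp add: power_mod)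
      then have "(e * ?z^2) mod 3^n = (e * s (Suc n)^2) mod 3^n" by (rule mod_mult_cong[OF refl])
      also have "\<dots> = ((e * s (Suc n)^2) mod 3^Suc n) mod 3^n" by (simp add: mod_mod_cancel)
      also have "\<dots> = f n mod 3^n" using s_root[of "Suc n"] f[of n] by (simp add: root_def mod_mod_cancel)
      finally have "(e * ?z^2) mod 3^n = f n mod 3^n" .
      moreover have "(3::int) dvd 3^n" using n by simp
      then have "?z mod 3 = 1" using s_root[of "Suc n"] by (simp add: mod_mod_cancel root_def)
      ultimately have "root n ?z" by (simp add: root_def)
      then show ?thesis using unique[OF n _ s_root[OF n]] by blast
    qed
  qed
  moreover have "(e * s n ^ 2) mod 3^n = f n mod 3^n" "n \<ge> 1 \<Longrightarrow> s n mod 3 = 1" for n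
    using s_root[of n] by (cases "n = 0"; auto simp: root_def)+
  ultimately show ?thesis using that by blast
qed

subsection \<open>Valuation and leading digit\<close>

text \<open>For nonzero \<open>x\<close>, \<open>x = 3^(zp_val x) \<cdot> u\<close> with \<open>u\<close> a unit and \<open>u \<equiv> zp_lead x (mod 3)\<close>.\<close>

definition zp_val :: "zp \<Rightarrow> nat" where
  "zp_val x = (LEAST k. x (Suc k) \<noteq> 0)"

definition zp_lead :: "zp \<Rightarrow> int" where
  "zp_lead x = (x (Suc (zp_val x)) div 3^(zp_val x)) mod 3"

lemma mod_power3_digit:
  fixes m :: int
  assumes "3^k dvd m" "k < n"
  shows "3^k dvd m mod 3^n" "(m mod 3^n div 3^k) mod 3 = (m div 3^k) mod 3"
proof -
  obtain w where w: "m = 3^k * w" using assms(1) by blast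
  obtain j where nj: "n = k + Suc j" using less_imp_Suc_add[OF assms(2)] by auto
  have "m mod 3^n = m - m div 3^n * 3^n" by (simp add: minus_div_mult_eq_mod)
  also have "\<dots> = 3^k * (w - 3 * (3^j * (m div 3^n)))"
    unfolding w nj by (simp add: power_add algebra_simps)
  finally have e: "m mod 3^n = 3^k * (w - 3 * (3^j * (m div 3^n)))" .
  then show "3^k dvd m mod 3^n" by simp
  show "(m mod 3^n div 3^k) mod 3 = (m div 3^k) mod 3"
    unfolding e using w by (simp add: mod_eq_dvd_iff)
qed

lemma Zp3_below_val: assumes "x \<in> Zp3" "n \<le> zp_val x" shows "x n = 0"
proof (cases n)
  case 0 then show ?thesis using Zp3_at_0[OF assms(1)] by simp
next
  case (Suc j)
  show ?thesis
  proof (cases "\<exists>k. x (Suc k) \<noteq> 0")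
    case True
    then show ?thesis using assms(2) not_less_Least[of j "\<lambda>k. x (Suc k) \<noteq> 0"]
      unfolding Suc zp_val_def by auto
  qed (use Suc in auto)
qed

lemma Zp3_at_Suc_val: assumes "x \<in> Zp3" "x \<noteq> zp_zero" shows "x (Suc (zp_val x)) \<noteq> 0"
  using Zp3_nonzero_at_Suc[OF assms] LeastI[of "\<lambda>k. x (Suc k) \<noteq> 0"] unfolding zp_val_def by blast

lemma zp_val_leadI:
  assumes "x \<in> Zp3" "k < n" "x n = m mod 3^n" "3^k dvd m" "\<not> 3 dvd m div 3^k"
  shows "x \<noteq> zp_zero" "zp_val x = k" "zp_lead x = (m div 3^k) mod 3"
proof -
  have x_le: "x j = m mod 3^j" if "j \<le> n" for j
    using Zp3_mod_le[OF assms(1) that] assms(3) that by (simp add: mod_mod_cancel le_imp_power_dvd)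
  have low: "x j = 0" if "j \<le> k" for j
    using x_le[of j] that assms(2,4) by (simp add: dvd_trans[OF le_imp_power_dvd])
  have digit: "(x (Suc k) div 3^k) mod 3 = (m div 3^k) mod 3"
    using x_le[of "Suc k"] mod_power3_digit(2)[OF assms(4), of "Suc k"] assms(2) by simp
  then have nz: "x (Suc k) \<noteq> 0" using assms(5) by (auto simp: dvd_eq_mod_eq_0)
  then show "x \<noteq> zp_zero" by auto
  show val: "zp_val x = k" unfolding zp_val_def
  proof (rule Least_equality)
    show "k \<le> j" if "x (Suc j) \<noteq> 0" for j using that low[of "Suc j"] by (cases "Suc j \<le> k") auto
  qed (rule nz)
  show "zp_lead x = (m div 3^k) mod 3" unfolding zp_lead_def val by (rule digit)
qed

lemma zp_val_lead_at:
  assumes "x \<in> Zp3" "x \<noteq> zp_zero" "zp_val x < n"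
  shows "3^(zp_val x) dvd x n" "(x n div 3^(zp_val x)) mod 3 = zp_lead x" "zp_lead x \<noteq> 0"
proof -
  let ?v = "zp_val x"
  have "x n mod 3^?v = 0" using Zp3_mod_le[OF assms(1)] Zp3_below_val[OF assms(1)] assms(3) by simp
  then show d: "3^?v dvd x n" by (simp add: dvd_eq_mod_eq_0)
  have xs: "x n mod 3^Suc ?v = x (Suc ?v)" using Zp3_mod_le[OF assms(1), of "Suc ?v" n] assms(3) by simp
  then show "(x n div 3^?v) mod 3 = zp_lead x"
    using mod_power3_digit(2)[OF d, of "Suc ?v"] unfolding zp_lead_def by simp
  obtain w where w: "x (Suc ?v) = 3^?v * w" using mod_power3_digit(1)[OF d, of "Suc ?v"] xs by auto
  have "0 \<le> 3^?v * w" "3^?v * w < 3^?v * 3" using Zp3_bounds[OF assms(1), of "Suc ?v"] w by auto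
  moreover have "(0::int) < 3^?v" by simp
  ultimately have "0 \<le> w" "w < 3" by (simp_all add: zero_le_mult_iff mult_less_cancel_left_pos)
  moreover have "w \<noteq> 0" using Zp3_at_Suc_val[OF assms(1,2)] w by auto
  ultimately show "zp_lead x \<noteq> 0" unfolding zp_lead_def using w by simp
qed

lemma zp_val_dvd: assumes "x \<in> Zp3" shows "3^(zp_val x) dvd x n"
proof (cases "x \<noteq> zp_zero \<and> zp_val x < n")
  case True then show ?thesis using zp_val_lead_at(1)[OF assms] by blast
next
  case False then show ?thesis using Zp3_below_val[OF assms, of n] by (cases "x = zp_zero") auto
qed

lemma Zp3_dvd_if_le_val:
  assumes "x \<in> Zp3" "x = zp_zero \<or> k \<le> zp_val x" shows "3^k dvd x n"
  using assms dvd_trans[OF le_imp_power_dvd zp_val_dvd[OF assms(1)]] by auto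

lemma zp_lead_cases: assumes "x \<in> Zp3" "x \<noteq> zp_zero" shows "zp_lead x = 1 \<or> zp_lead x = 2"
proof -
  have "zp_lead x \<noteq> 0" using zp_val_lead_at(3)[OF assms, of "Suc (zp_val x)"] by simp
  moreover have "0 \<le> zp_lead x" "zp_lead x < 3" unfolding zp_lead_def by auto
  ultimately show ?thesis by auto
qed

lemma Zp3_unit_part:
  assumes "x \<in> Zp3" "x \<noteq> zp_zero" "zp_val x < n"
  obtains u where "x n = 3^(zp_val x) * u" "u mod 3 = zp_lead x" "\<not> 3 dvd u"
proof -
  obtain u where u: "x n = 3^(zp_val x) * u" using zp_val_lead_at(1)[OF assms] by blast
  have "u mod 3 = zp_lead x" using zp_val_lead_at(2)[OF assms] u by simp
  moreover then have "\<not> 3 dvd u" using zp_val_lead_at(3)[OF assms] by (simp add: dvd_eq_mod_eq_0)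
  ultimately show ?thesis using that u by blast
qed

lemma zp_val_mul:
  assumes "x \<in> Zp3" "y \<in> Zp3" "x \<noteq> zp_zero" "y \<noteq> zp_zero"
  shows "zp_mul x y \<noteq> zp_zero" "zp_val (zp_mul x y) = zp_val x + zp_val y"
    "zp_lead (zp_mul x y) = (zp_lead x * zp_lead y) mod 3"
proof -
  let ?k = "zp_val x + zp_val y"
  obtain u where u: "x (Suc ?k) = 3^zp_val x * u" "u mod 3 = zp_lead x" "\<not> 3 dvd u"
    using Zp3_unit_part[OF assms(1,3), of "Suc ?k"] by auto
  obtain w where w: "y (Suc ?k) = 3^zp_val y * w" "w mod 3 = zp_lead y" "\<not> 3 dvd w"
    using Zp3_unit_part[OF assms(2,4), of "Suc ?k"] by auto
  have "x (Suc ?k) * y (Suc ?k) = 3^?k * (u * w)" unfolding u w by (simp add: power_add ac_simps)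
  then have e: "zp_mul x y (Suc ?k) = (3^?k * (u * w)) mod 3^Suc ?k" by (simp add: zp_mul_def)
  have "\<not> 3 dvd 3^?k * (u * w) div 3^?k" using not_3_dvd_mult[OF u(3) w(3)] by simp
  note r = zp_val_leadI[OF zp_mul_in_Zp3[OF assms(1,2)] lessI e dvd_triv_left this]
  show "zp_mul x y \<noteq> zp_zero" "zp_val (zp_mul x y) = ?k" using r(1,2) by blast+
  have "zp_lead (zp_mul x y) = (u * w) mod 3" using r(3) by simp
  also have "\<dots> = ((u mod 3) * (w mod 3)) mod 3" by (rule mod_mult_eq[symmetric])
  finally show "zp_lead (zp_mul x y) = (zp_lead x * zp_lead y) mod 3" using u(2) w(2) by simp
qed

lemma zp_val_add_higher:
  assumes "x \<in> Zp3" "y \<in> Zp3" "x \<noteq> zp_zero" "\<And>n. 3^Suc (zp_val x) dvd y n"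
  shows "zp_add x y \<noteq> zp_zero" "zp_val (zp_add x y) = zp_val x" "zp_lead (zp_add x y) = zp_lead x"
proof -
  let ?k = "zp_val x"
  obtain u where u: "x (Suc ?k) = 3^?k * u" "u mod 3 = zp_lead x" "\<not> 3 dvd u"
    using Zp3_unit_part[OF assms(1,3), of "Suc ?k"] by auto
  obtain r where r: "y (Suc ?k) = 3^Suc ?k * r" using assms(4) by blast
  have m: "x (Suc ?k) + y (Suc ?k) = 3^?k * (u + 3 * r)" unfolding u r by (simp add: algebra_simps)
  have "zp_add x y (Suc ?k) = (3^?k * (u + 3 * r)) mod 3^Suc ?k" unfolding zp_add_def m ..
  moreover have "\<not> 3 dvd 3^?k * (u + 3 * r) div 3^?k" using u(3) by (simp add: dvd_add_left_iff)
  ultimately have "zp_add x y \<noteq> zp_zero" "zp_val (zp_add x y) = ?k"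
    "zp_lead (zp_add x y) = (u + 3 * r) mod 3"
    using zp_val_leadI[OF zp_add_in_Zp3[OF assms(1,2)], of ?k "Suc ?k" "3^?k * (u + 3 * r)"] by auto
  then show "zp_add x y \<noteq> zp_zero" "zp_val (zp_add x y) = ?k" "zp_lead (zp_add x y) = zp_lead x"
    using u(2) by simp_all
qed

lemma zp_val_neg:
  assumes "x \<in> Zp3" "x \<noteq> zp_zero"
  shows "zp_neg x \<noteq> zp_zero" "zp_val (zp_neg x) = zp_val x" "zp_lead (zp_neg x) = (- zp_lead x) mod 3"
proof -
  let ?k = "zp_val x"
  obtain u where u: "x (Suc ?k) = 3^?k * u" "u mod 3 = zp_lead x" "\<not> 3 dvd u"
    using Zp3_unit_part[OF assms(1,2), of "Suc ?k"] by auto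
  have "zp_neg x (Suc ?k) = (3^?k * (- u)) mod 3^Suc ?k" unfolding zp_neg_def u by simp
  moreover have "3^?k * (- u) div 3^?k = - u" by (rule nonzero_mult_div_cancel_left) simp
  ultimately have "zp_neg x \<noteq> zp_zero" "zp_val (zp_neg x) = ?k" "zp_lead (zp_neg x) = (- u) mod 3"
    using zp_val_leadI[OF zp_neg_in_Zp3[OF assms(1)], of ?k "Suc ?k" "3^?k * (- u)"] u(3) by auto
  moreover have "(- u) mod 3 = (- (u mod 3)) mod 3" by (rule mod_minus_eq[symmetric])
  ultimately show "zp_neg x \<noteq> zp_zero" "zp_val (zp_neg x) = ?k" "zp_lead (zp_neg x) = (- zp_lead x) mod 3"
    using u(2) by simp_all
qed

lemma zp_val_of_int:
  assumes "c = 3^k * u" "\<not> 3 dvd u"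
  shows "zp_of_int c \<noteq> zp_zero" "zp_val (zp_of_int c) = k" "zp_lead (zp_of_int c) = u mod 3"
proof -
  have "zp_of_int c (Suc k) = c mod 3^Suc k" by (simp add: zp_of_int_def)
  moreover have "3^k dvd c" "c div 3^k = u" using assms(1) by simp_all
  ultimately show "zp_of_int c \<noteq> zp_zero" "zp_val (zp_of_int c) = k" "zp_lead (zp_of_int c) = u mod 3"
    using zp_val_leadI[OF zp_of_int_in_Zp3, of k "Suc k" c] assms(2) by auto
qed

lemma zp_mul_of_int_dvd:
  assumes "t \<in> Zp3" "3^j dvd c"
  shows "3^(zp_val t + j) dvd zp_mul (zp_of_int c) t n"
proof -
  have "3^(zp_val t + j) dvd c * t n"
    using mult_dvd_mono[OF assms(2) zp_val_dvd[OF assms(1), of n]] by (simp add: power_add ac_simps)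
  moreover have "zp_mul (zp_of_int c) t n = (c * t n) mod 3^n"
    by (simp add: zp_mul_def zp_of_int_def mod_mult_left_eq)
  ultimately show ?thesis
    by (cases "zp_val t + j \<le> n") (auto simp: dvd_mod le_imp_power_dvd dvd_trans[of "3^n" "3^(zp_val t + j)"])
qed

subsection \<open>The character \<open>\<chi>\<close>\<close>

text \<open>\<open>chi (-d)\<close> is the Hilbert symbol \<open>(\<cdot>, 3d)\<^sub>3\<close> on nonzero elements, with the values \<open>\<plusminus>1\<close>
  encoded as the residues \<open>1, 2\<close>.\<close>

definition chi :: "int \<Rightarrow> zp \<Rightarrow> int" where
  "chi e x = (zp_lead x * e^(zp_val x)) mod 3"

lemma chi_cases:
  assumes "x \<in> Zp3" "x \<noteq> zp_zero" "\<not> 3 dvd e"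
  shows "chi e x = 1 \<or> chi e x = 2"
proof -
  have "\<not> 3 dvd zp_lead x" using zp_lead_cases[OF assms(1,2)] by auto
  then have "\<not> 3 dvd zp_lead x * e^(zp_val x)" using not_3_dvd_mult not_3_dvd_power assms(3) by blast
  then have "chi e x \<noteq> 0" unfolding chi_def by (simp add: dvd_eq_mod_eq_0)
  moreover have "0 \<le> chi e x" "chi e x < 3" unfolding chi_def by auto
  ultimately show ?thesis by auto
qed

lemma chi_mul:
  assumes "x \<in> Zp3" "y \<in> Zp3" "x \<noteq> zp_zero" "y \<noteq> zp_zero"
  shows "chi e (zp_mul x y) = (chi e x * chi e y) mod 3"
proof -
  have "chi e (zp_mul x y) = (((zp_lead x * zp_lead y) mod 3) * e^(zp_val x + zp_val y)) mod 3"
    unfolding chi_def using zp_val_mul[OF assms] by simp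
  also have "\<dots> = ((zp_lead x * zp_lead y) * e^(zp_val x + zp_val y)) mod 3"
    by (rule mod_mult_left_eq)
  also have "\<dots> = ((zp_lead x * e^zp_val x) * (zp_lead y * e^zp_val y)) mod 3"
    by (simp add: power_add ac_simps)
  also have "\<dots> = (((zp_lead x * e^zp_val x) mod 3) * ((zp_lead y * e^zp_val y) mod 3)) mod 3"
    by (rule mod_mult_eq[symmetric])
  finally show ?thesis unfolding chi_def .
qed

lemma chi_mul_eq_1_iff:
  assumes "x \<in> Zp3" "y \<in> Zp3" "x \<noteq> zp_zero" "y \<noteq> zp_zero" "\<not> 3 dvd e"
  shows "chi e (zp_mul x y) = 1 \<longleftrightarrow> chi e x = chi e y"
  using chi_mul[OF assms(1-4)] chi_cases[OF assms(1,3,5)] chi_cases[OF assms(2,4,5)] by auto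

lemma chi_square:
  assumes "x \<in> Zp3" "x \<noteq> zp_zero" "\<not> 3 dvd e"
  shows "chi e (zp_mul x x) = 1"
  using chi_mul_eq_1_iff[OF assms(1,1,2,2,3)] by simp

lemma chi_neg:
  assumes "x \<in> Zp3" "x \<noteq> zp_zero"
  shows "chi e (zp_neg x) = (- chi e x) mod 3"
proof -
  have "chi e (zp_neg x) = (((- zp_lead x) mod 3) * e^(zp_val x)) mod 3"
    unfolding chi_def using zp_val_neg[OF assms] by simp
  also have "\<dots> = (- (zp_lead x * e^(zp_val x))) mod 3" by (simp add: mod_mult_left_eq)
  also have "\<dots> = (- ((zp_lead x * e^(zp_val x)) mod 3)) mod 3" by (rule mod_minus_eq[symmetric])
  finally show ?thesis unfolding chi_def .
qed

lemma chi_add_higher: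
  assumes "x \<in> Zp3" "y \<in> Zp3" "x \<noteq> zp_zero" "\<And>n. 3^Suc (zp_val x) dvd y n"
  shows "zp_add x y \<noteq> zp_zero" "chi e (zp_add x y) = chi e x"
  using zp_val_add_higher[OF assms] unfolding chi_def by auto

subsection \<open>Norms from \<open>\<int>\<^sub>3[\<surd>D]\<close>\<close>

lemma mod_div_power3_eq_iff:
  fixes m m' :: int
  assumes "3^k dvd m" "3^k dvd m'"
  shows "(m div 3^k) mod 3^n = (m' div 3^k) mod 3^n \<longleftrightarrow> m mod 3^(n + k) = m' mod 3^(n + k)"
proof -
  obtain w w' where "m = 3^k * w" "m' = 3^k * w'" using assms by blast
  then show ?thesis by (simp add: power_add mult.commute[of "3^n"] mod_mult_mult1)
qed

lemma unit_power_mod3: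
  fixes u :: int assumes "\<not> 3 dvd u" shows "u^k mod 3 = u^(k mod 2) mod 3"
proof -
  have "u^k = u^(2 * (k div 2)) * u^(k mod 2)" by (simp flip: power_add)
  then have "u^k mod 3 = ((u^(2 * (k div 2)) mod 3) * u^(k mod 2)) mod 3" by (simp add: mod_mult_left_eq)
  then show ?thesis using even_power_mod3[OF assms] by simp
qed

lemma Zp3_power3_mul_square:
  assumes "s \<in> Zp3" "s (Suc j) mod 3 = 1"
  obtains W where "W \<in> Zp3" "W \<noteq> zp_zero" "\<And>n. (W n * W n) mod 3^n = (3^(2*j) * s n ^ 2) mod 3^n"
proof
  define W where "W n = (3^j * s n) mod 3^n" for n
  show "W \<in> Zp3"
    by (rule Zp3_of_mod_compatible[of _ "\<lambda>n. 3^j * s n"])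
      (simp_all add: W_def mod_mult_cong[OF refl Zp3_Suc_mod[OF assms(1)]])
  have "W (Suc j) = 3^j * (s (Suc j) mod 3)" unfolding W_def power_Suc2 by (rule mod_mult_mult1)
  then have "W (Suc j) \<noteq> zp_zero (Suc j)" using assms(2) by simp
  then show "W \<noteq> zp_zero" by metis
  have "(3::int)^(2*j) = 3^j * 3^j" by (simp add: mult_2 power_add)
  then have "(3^j * s n) * (3^j * s n) = 3^(2*j) * s n ^ 2" for n
    by (simp add: algebra_simps power2_eq_square)
  then show "(W n * W n) mod 3^n = (3^(2*j) * s n ^ 2) mod 3^n" for n
    unfolding W_def by (metis mod_mult_eq)
qed

lemma Zp3_eq_power3_unit:
  assumes a: "a \<in> Zp3" "a \<noteq> zp_zero" and e: "\<not> 3 dvd e" "zp_lead a = e mod 3"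
  obtains s where "s \<in> Zp3" "\<And>n. n \<ge> 1 \<Longrightarrow> s n mod 3 = 1"
    "\<And>n. a n = (3^zp_val a * (e * s n ^ 2)) mod 3^n"
proof -
  define k where "k = zp_val a"
  have dvd_a: "3^k dvd a n" for n unfolding k_def by (rule zp_val_dvd[OF a(1)])
  define u where "u n = a (n + k) div 3^k" for n
  have u_compat: "u (Suc n) mod 3^n = u n mod 3^n" for n
    unfolding u_def mod_div_power3_eq_iff[OF dvd_a dvd_a]
    using Zp3_mod_le[OF a(1), of "n + k" "Suc n + k"] Zp3_mod_self[OF a(1)] by simp
  have u_1: "u 1 mod 3 = e mod 3"
    using zp_val_lead_at(2)[OF a, of "1 + zp_val a"] e(2) by (simp add: u_def k_def)
  obtain s where s: "s \<in> Zp3" "\<And>n. (e * s n ^ 2) mod 3^n = u n mod 3^n"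
    "\<And>n. n \<ge> 1 \<Longrightarrow> s n mod 3 = 1"
    using hensel_square_root[OF e(1) u_compat u_1] by blast
  have "a n = (3^k * (e * s n ^ 2)) mod 3^n" for n
  proof -
    have "((3^k * (e * s n ^ 2)) div 3^k) mod 3^n = (a (n + k) div 3^k) mod 3^n"
      using s(2)[of n] by (simp add: u_def)
    then have eq: "(3^k * (e * s n ^ 2)) mod 3^(n + k) = a (n + k) mod 3^(n + k)"
      by (simp only: mod_div_power3_eq_iff[OF dvd_triv_left dvd_a])
    have dvd_n: "(3::int)^n dvd 3^(n + k)" by (simp add: le_imp_power_dvd)
    have "(3^k * (e * s n ^ 2)) mod 3^n = ((3^k * (e * s n ^ 2)) mod 3^(n + k)) mod 3^n"
      by (rule mod_mod_cancel[OF dvd_n, symmetric])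
    also have "\<dots> = a (n + k) mod 3^n" unfolding eq by (rule mod_mod_cancel[OF dvd_n])
    also have "\<dots> = a n" by (rule Zp3_mod_le[OF a(1)]) simp
    finally show ?thesis ..
  qed
  then show ?thesis using that s(1,3) unfolding k_def by blast
qed

lemma Zp3_eq_power3_unit_square:
  assumes a: "a \<in> Zp3" "a \<noteq> zp_zero" and e: "\<not> 3 dvd e" "zp_lead a = e mod 3"
  obtains W where "W \<in> Zp3" "W \<noteq> zp_zero"
    "\<And>n. a n = (3^(zp_val a mod 2) * e * (W n * W n)) mod 3^n"
proof -
  let ?k = "zp_val a"
  obtain s where s: "s \<in> Zp3" "\<And>n. n \<ge> 1 \<Longrightarrow> s n mod 3 = 1"
    "\<And>n. a n = (3^?k * (e * s n ^ 2)) mod 3^n"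
    using Zp3_eq_power3_unit[OF a e] by blast
  define j where "j = ?k div 2"
  have "s (Suc j) mod 3 = 1" by (rule s(2)) simp
  then obtain W where W: "W \<in> Zp3" "W \<noteq> zp_zero"
    "\<And>n. (W n * W n) mod 3^n = (3^(2*j) * s n ^ 2) mod 3^n"
    using Zp3_power3_mul_square[OF s(1)] by blast
  have "a n = (3^(?k mod 2) * e * (W n * W n)) mod 3^n" for n
  proof -
    have "(3::int)^?k = 3^(?k mod 2) * 3^(2*j)" unfolding j_def by (simp flip: power_add)
    then have "a n = ((3^(?k mod 2) * e) * (3^(2*j) * s n ^ 2)) mod 3^n" using s(3) by (simp add: ac_simps)
    also have "\<dots> = ((3^(?k mod 2) * e) * ((3^(2*j) * s n ^ 2) mod 3^n)) mod 3^n"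
      by (rule mod_mult_right_eq[symmetric])
    also have "\<dots> = (3^(?k mod 2) * e * (W n * W n)) mod 3^n"
      unfolding W(3)[symmetric] by (rule mod_mult_right_eq)
    finally show ?thesis .
  qed
  then show ?thesis using that W(1,2) by blast
qed

definition zp_norm :: "int \<Rightarrow> zp \<Rightarrow> zp \<Rightarrow> zp" where
  "zp_norm D X Y = zp_add (zp_mul X X) (zp_neg (zp_mul (zp_of_int D) (zp_mul Y Y)))"

lemma zp_norm_zero_zero: "zp_norm D zp_zero zp_zero = zp_zero"
  by (simp add: zp_norm_def)

lemma zp_norm_apply: "zp_norm D X Y n = (X n * X n - D * (Y n * Y n)) mod 3^n"
  by (simp add: zp_norm_def zp_add_def zp_mul_def zp_neg_def zp_of_int_def mod_simps)

locale ramified_at_3 =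
  fixes D d :: int
  assumes D_eq: "D = 3 * d" and d_unit: "\<not> 3 dvd d"
begin

lemma neg_d_unit: "\<not> 3 dvd - d"
  using d_unit by simp

lemma zp_val_chi_D:
  "zp_of_int D \<noteq> zp_zero" "zp_val (zp_of_int D) = 1" "chi (- d) (zp_of_int D) = 2"
proof -
  note D = zp_val_of_int[of D 1 d, OF _ d_unit]
  show "zp_of_int D \<noteq> zp_zero" "zp_val (zp_of_int D) = 1" using D D_eq by auto
  have "chi (- d) (zp_of_int D) = ((d mod 3) * (- d)) mod 3" unfolding chi_def using D D_eq by simp
  also have "\<dots> = (d * (- d)) mod 3" by (rule mod_mult_left_eq)
  also have "\<dots> = (- (d * d)) mod 3" by simp
  also have "\<dots> = (- (d * d mod 3)) mod 3" by (rule mod_minus_eq[symmetric])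
  finally show "chi (- d) (zp_of_int D) = 2" using power2_mod3_eq_1[OF d_unit] by (simp add: power2_eq_square)
qed

lemma zp_val_chi_neg_D_square:
  assumes "Y \<in> Zp3" "Y \<noteq> zp_zero"
  defines "R \<equiv> zp_neg (zp_mul (zp_of_int D) (zp_mul Y Y))"
  shows "R \<noteq> zp_zero" "zp_val R = 2 * zp_val Y + 1" "chi (- d) R = 1"
proof -
  have YY: "zp_mul Y Y \<in> Zp3" "zp_mul Y Y \<noteq> zp_zero" "zp_val (zp_mul Y Y) = 2 * zp_val Y"
    using zp_val_mul[OF assms(1,1,2,2)] assms(1) by auto
  note DYY = zp_val_mul[OF zp_of_int_in_Zp3 YY(1) zp_val_chi_D(1) YY(2)]
  note R = zp_val_neg[OF zp_mul_in_Zp3[OF zp_of_int_in_Zp3 YY(1)] DYY(1)]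
  show "R \<noteq> zp_zero" unfolding R_def by (rule R(1))
  show "zp_val R = 2 * zp_val Y + 1" unfolding R_def R(2) DYY(2) YY(3) zp_val_chi_D(2) by simp
  have "chi (- d) (zp_mul (zp_of_int D) (zp_mul Y Y)) = 2"
    using chi_mul[OF zp_of_int_in_Zp3 YY(1) zp_val_chi_D(1) YY(2)] zp_val_chi_D(3)
      chi_square[OF assms(1,2) neg_d_unit] by simp
  then show "chi (- d) R = 1"
    using chi_neg[OF zp_mul_in_Zp3[OF zp_of_int_in_Zp3 YY(1)] DYY(1)] unfolding R_def by simp
qed

lemma zp_val_norm_zero_left:
  assumes "Y \<in> Zp3" "Y \<noteq> zp_zero"
  shows "zp_val (zp_norm D zp_zero Y) = 2 * zp_val Y + 1"
  using zp_val_chi_neg_D_square[OF assms] assms(1) by (simp add: zp_norm_def)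

text \<open>The valuations of \<open>X\<^sup>2\<close> and \<open>D Y\<^sup>2\<close> have different parity, so the norm has the
  character value of the summand of smaller valuation.\<close>

lemma zp_norm_nonzero_chi:
  assumes "X \<in> Zp3" "Y \<in> Zp3" "X \<noteq> zp_zero \<or> Y \<noteq> zp_zero"
  shows "zp_norm D X Y \<noteq> zp_zero" "chi (- d) (zp_norm D X Y) = 1"
proof -
  let ?P = "zp_mul X X" and ?R = "zp_neg (zp_mul (zp_of_int D) (zp_mul Y Y))"
  have PZ: "?P \<in> Zp3" and RZ: "?R \<in> Zp3" using assms by simp_all
  have P: "?P \<noteq> zp_zero \<and> zp_val ?P = 2 * zp_val X \<and> chi (- d) ?P = 1" if "X \<noteq> zp_zero"
    using zp_val_mul[OF assms(1,1) that that] chi_square[OF assms(1) that neg_d_unit] by simp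
  note R = zp_val_chi_neg_D_square[OF assms(2)]
  have "zp_norm D X Y \<noteq> zp_zero \<and> chi (- d) (zp_norm D X Y) = 1"
  proof (cases "X = zp_zero \<or> (Y \<noteq> zp_zero \<and> zp_val ?R < zp_val ?P)")
    case True
    then have Y: "Y \<noteq> zp_zero" using assms(3) by auto
    have "?P = zp_zero \<or> Suc (zp_val ?R) \<le> zp_val ?P" using True by auto
    then have "3^Suc (zp_val ?R) dvd ?P n" for n by (rule Zp3_dvd_if_le_val[OF PZ])
    then have "zp_add ?R ?P \<noteq> zp_zero \<and> chi (- d) (zp_add ?R ?P) = 1"
      using chi_add_higher[OF RZ PZ R(1)[OF Y]] R(3)[OF Y] by simp
    then show ?thesis by (simp add: zp_norm_def zp_add_commute)
  next
    case False
    then have X: "X \<noteq> zp_zero" by simp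
    have "?R = zp_zero \<or> Suc (zp_val ?P) \<le> zp_val ?R"
    proof (cases "Y = zp_zero")
      case False
      then have "zp_val ?R = 2 * zp_val Y + 1" "\<not> zp_val ?R < zp_val ?P"
        using R(2) \<open>\<not> (X = zp_zero \<or> _)\<close> by auto
      moreover have "zp_val ?P = 2 * zp_val X" using P[OF X] by simp
      ultimately have "Suc (zp_val ?P) \<le> zp_val ?R" by presburger
      then show ?thesis ..
    qed simp
    then have "3^Suc (zp_val ?P) dvd ?R n" for n by (rule Zp3_dvd_if_le_val[OF RZ])
    then show ?thesis using chi_add_higher[OF PZ RZ] P[OF X] by (simp add: zp_norm_def)
  qed
  then show "zp_norm D X Y \<noteq> zp_zero" "chi (- d) (zp_norm D X Y) = 1" by auto
qed

lemma chi_eq_1_imp_norm: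
  assumes a: "a \<in> Zp3" "a \<noteq> zp_zero" and chi_a: "chi (- d) a = 1"
  obtains X Y where "X \<in> Zp3" "Y \<in> Zp3" "X \<noteq> zp_zero \<or> Y \<noteq> zp_zero"
    "a = zp_norm D X Y"
proof -
  have "(zp_lead a * (- d)^(zp_val a mod 2)) mod 3 = (zp_lead a * ((- d)^(zp_val a mod 2) mod 3)) mod 3"
    by (rule mod_mult_right_eq[symmetric])
  also have "\<dots> = (zp_lead a * ((- d)^zp_val a mod 3)) mod 3"
    by (simp only: unit_power_mod3[OF neg_d_unit, of "zp_val a"])
  also have "\<dots> = 1" using chi_a unfolding chi_def by (simp only: mod_mult_right_eq)
  finally have lead_chi: "(zp_lead a * (- d)^(zp_val a mod 2)) mod 3 = 1" .
  consider "even (zp_val a)" | "odd (zp_val a)" by blast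
  then show ?thesis
  proof cases
    case 1
    then have "zp_lead a = 1 mod 3" using lead_chi zp_lead_cases[OF a] by auto
    then obtain W where "W \<in> Zp3" "W \<noteq> zp_zero" "\<And>n. a n = (W n * W n) mod 3^n"
      using Zp3_eq_power3_unit_square[OF a, of 1] 1 by (auto simp: even_iff_mod_2_eq_zero)
    then show ?thesis using that[of W zp_zero] by (simp add: fun_eq_iff zp_norm_apply)
  next
    case 2
    have "(- d) mod 3 = 1 \<or> (- d) mod 3 = 2" using neg_d_unit by presburger
    then have "zp_lead a = (- d) mod 3"
      using lead_chi zp_lead_cases[OF a] 2 unit_mod3_inverse_eq[of "zp_lead a" "(- d) mod 3"]
      by (simp add: odd_iff_mod_2_eq_one mod_mult_right_eq)
    then obtain W where "W \<in> Zp3" "W \<noteq> zp_zero" "\<And>n. a n = (3 * (- d) * (W n * W n)) mod 3^n"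
      using Zp3_eq_power3_unit_square[OF a neg_d_unit] 2 by (auto simp: odd_iff_mod_2_eq_one)
    then show ?thesis using that[of zp_zero W] D_eq by (simp add: fun_eq_iff zp_norm_apply)
  qed
qed

end

lemma q3_eq_zero_iff: "x \<in> Zp3 \<Longrightarrow> q3_eq (x, zp_of_int 1) q3_zero \<longleftrightarrow> x = zp_zero"
  by (simp add: q3_eq_def q3_zero_def q3_of_zp_def zp_mul_one_right)

text \<open>If \<open>p r = X\<^sup>2 - D Y\<^sup>2\<close> then \<open>(x, y, z) = (r, Y, X)\<close> solves \<open>z\<^sup>2 = (p/r) x\<^sup>2 + D y\<^sup>2\<close>.\<close>

lemma hilbert3_eq_1_if_norm:
  assumes "p \<in> Zp3" "r \<in> Zp3" "X \<in> Zp3" "Y \<in> Zp3" "X \<noteq> zp_zero \<or> Y \<noteq> zp_zero"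
    and norm: "zp_mul p r = zp_norm D X Y"
  shows "hilbert3 (p, r) (q3_of_zp (zp_of_int D)) = 1"
proof -
  let ?one = "zp_of_int 1"
  let ?x = "(r, ?one)" and ?y = "(Y, ?one)" and ?z = "(X, ?one)"
  have Q: "?x \<in> Q3" "?y \<in> Q3" "?z \<in> Q3" using assms zp_one_nonzero by (auto simp: Q3_def)
  have nontrivial: "\<not> (q3_eq ?x q3_zero \<and> q3_eq ?y q3_zero \<and> q3_eq ?z q3_zero)"
    using q3_eq_zero_iff assms by auto
  have "zp_mul (zp_mul X X) r = zp_add (zp_mul p (zp_mul r r)) (zp_mul (zp_mul (zp_of_int D) (zp_mul Y Y)) r)"
  proof
    fix n
    have "(p n * r n) mod 3^n = (X n * X n - D * (Y n * Y n)) mod 3^n"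
      using arg_cong[OF norm, of "\<lambda>f. f n"] by (simp add: zp_mul_def zp_norm_apply)
    then have "3^n dvd r n * (p n * r n - (X n * X n - D * (Y n * Y n)))"
      by (simp add: mod_eq_dvd_iff)
    moreover have "X n * X n * r n - (p n * (r n * r n) + D * (Y n * Y n) * r n)
        = - (r n * (p n * r n - (X n * X n - D * (Y n * Y n))))"
      by (simp add: algebra_simps)
    ultimately have "(X n * X n * r n) mod 3^n = (p n * (r n * r n) + D * (Y n * Y n) * r n) mod 3^n"
      by (simp only: mod_eq_dvd_iff dvd_minus_iff)
    then show "zp_mul (zp_mul X X) r n
        = zp_add (zp_mul p (zp_mul r r)) (zp_mul (zp_mul (zp_of_int D) (zp_mul Y Y)) r) n"
      by (simp add: zp_mul_def zp_add_def zp_of_int_def mod_simps)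
  qed
  then have "q3_eq (q3_mul ?z ?z) (q3_add (q3_mul (p, r) (q3_mul ?x ?x)) (q3_mul (q3_of_zp (zp_of_int D)) (q3_mul ?y ?y)))"
    unfolding q3_eq_def q3_mul_def q3_add_def q3_of_zp_def using assms(1-4) by (simp add: zp_mul_one_right)
  with Q nontrivial have "\<exists>x\<in>Q3. \<exists>y\<in>Q3. \<exists>z\<in>Q3.
      \<not> (q3_eq x q3_zero \<and> q3_eq y q3_zero \<and> q3_eq z q3_zero) \<and>
      q3_eq (q3_mul z z) (q3_add (q3_mul (p, r) (q3_mul x x)) (q3_mul (q3_of_zp (zp_of_int D)) (q3_mul y y)))"
    by blast
  then show ?thesis unfolding hilbert3_def by (rule if_P)
qed

definition zp_lin :: "int \<Rightarrow> (nat \<Rightarrow> zp) \<Rightarrow> zp" where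
  "zp_lin c t = zp_add (t 0) (zp_mul (zp_of_int c) (t 1))"

lemma zp_lin_in_Zp3 [simp]: "t 0 \<in> Zp3 \<Longrightarrow> t 1 \<in> Zp3 \<Longrightarrow> zp_lin c t \<in> Zp3"
  by (simp add: zp_lin_def)

lemma in_S3_iff_norm:
  "in_S3 D A B t \<longleftrightarrow> (\<forall>i\<le>4. t i \<in> Zp3) \<and> (\<exists>i\<le>4. t i \<noteq> zp_zero) \<and>
     zp_mul (t 0) (t 1) = zp_norm D (t 2) (t 3) \<and>
     zp_mul (zp_lin A t) (zp_lin B t) = zp_norm D (t 2) (t 4)"
  by (simp add: in_S3_def zp_norm_def zp_lin_def)

lemma in_S3_coords:
  assumes "in_S3 D A B t"
  shows "t 0 \<in> Zp3" "t 1 \<in> Zp3" "t 2 \<in> Zp3" "t 3 \<in> Zp3" "t 4 \<in> Zp3"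
  using assms by (simp_all add: in_S3_def)

lemma in_S3_nonzero:
  assumes "in_S3 D A B t" "t 0 = zp_zero" "t 1 = zp_zero" "t 2 = zp_zero" "t 3 = zp_zero"
  shows "t 4 \<noteq> zp_zero"
proof -
  obtain i where "i \<le> 4" "t i \<noteq> zp_zero" using assms(1) by (auto simp: in_S3_def)
  moreover have "i = 0 \<or> i = 1 \<or> i = 2 \<or> i = 3 \<or> i = 4" using \<open>i \<le> 4\<close> by arith
  ultimately show ?thesis using assms(2-5) by auto
qed

lemma q_cands_eq: "q_cands A B t = [(t 0, zp_lin A t), (t 1, zp_lin A t), (t 0, zp_lin B t), (t 1, zp_lin B t)]"
  by (simp add: q_cands_def zp_lin_def)

context ramified_at_3
begin

lemma hilbert3_eq_1_if_chi_eq: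
  assumes "p \<in> Zp3" "r \<in> Zp3" "p \<noteq> zp_zero" "r \<noteq> zp_zero" "chi (- d) p = chi (- d) r"
  shows "hilbert3 (p, r) (q3_of_zp (zp_of_int D)) = 1"
proof -
  have "chi (- d) (zp_mul p r) = 1" using chi_mul_eq_1_iff[OF assms(1-4) neg_d_unit] assms(5) by simp
  then obtain X Y where "X \<in> Zp3" "Y \<in> Zp3" "X \<noteq> zp_zero \<or> Y \<noteq> zp_zero" "zp_mul p r = zp_norm D X Y"
    using chi_eq_1_imp_norm[OF zp_mul_in_Zp3[OF assms(1,2)] zp_val_mul(1)[OF assms(1-4)]] by blast
  then show ?thesis using hilbert3_eq_1_if_norm[OF assms(1,2)] by blast
qed

lemma in_S3_t1_nonzero:
  assumes S: "in_S3 D A B t"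
  shows "t 1 \<noteq> zp_zero"
proof
  assume t1: "t 1 = zp_zero"
  note Z = in_S3_coords[OF S]
  have "zp_norm D (t 2) (t 3) = zp_zero" using S t1 by (simp add: in_S3_iff_norm)
  then have t23: "t 2 = zp_zero" "t 3 = zp_zero" using zp_norm_nonzero_chi(1)[OF Z(3,4)] by auto
  have "zp_lin A t = t 0" "zp_lin B t = t 0" using t1 Z(1) by (simp_all add: zp_lin_def)
  then have t00: "zp_mul (t 0) (t 0) = zp_norm D zp_zero (t 4)"
    using S t23 by (simp add: in_S3_iff_norm)
  have t4: "t 4 \<noteq> zp_zero"
  proof
    assume "t 4 = zp_zero"
    then have "zp_mul (t 0) (t 0) = zp_zero" using t00 zp_norm_zero_zero by simp
    then have "t 0 = zp_zero" using zp_val_mul(1)[OF Z(1,1)] by blast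
    then show False using in_S3_nonzero[OF S _ t1 t23] \<open>t 4 = zp_zero\<close> by blast
  qed
  have t0: "t 0 \<noteq> zp_zero"
    using t00 zp_norm_nonzero_chi(1)[OF zp_zero_in_Zp3 Z(5)] t4 by auto
  \<comment> \<open>a square has even valuation, \<open>-D t\<^sub>4\<^sup>2\<close> an odd one\<close>
  have "2 * zp_val (t 0) = 2 * zp_val (t 4) + 1"
    using zp_val_mul(2)[OF Z(1,1) t0 t0] zp_val_norm_zero_left[OF Z(5) t4] t00 by simp
  then show False by presburger
qed

lemma chi_t0_eq_chi_t1:
  assumes S: "in_S3 D A B t" and t0: "t 0 \<noteq> zp_zero"
  shows "chi (- d) (t 0) = chi (- d) (t 1)"
proof -
  note Z = in_S3_coords[OF S] and t1 = in_S3_t1_nonzero[OF S]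
  have "zp_mul (t 0) (t 1) = zp_norm D (t 2) (t 3)" using S by (simp add: in_S3_iff_norm)
  moreover have "zp_mul (t 0) (t 1) \<noteq> zp_zero" by (rule zp_val_mul(1)[OF Z(1,2) t0 t1])
  ultimately have "chi (- d) (zp_mul (t 0) (t 1)) = 1"
    using zp_norm_nonzero_chi(2)[OF Z(3,4)] zp_norm_zero_zero by fastforce
  then show ?thesis using chi_mul_eq_1_iff[OF Z(1,2) t0 t1 neg_d_unit] by simp
qed

lemma chi_lin_eq:
  assumes S: "in_S3 D A B t" and A: "zp_lin A t \<noteq> zp_zero" and B: "zp_lin B t \<noteq> zp_zero"
  shows "chi (- d) (zp_lin A t) = chi (- d) (zp_lin B t)"
proof -
  note Z = in_S3_coords[OF S]
  have "zp_mul (zp_lin A t) (zp_lin B t) = zp_norm D (t 2) (t 4)" using S by (simp add: in_S3_iff_norm)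
  moreover have "zp_mul (zp_lin A t) (zp_lin B t) \<noteq> zp_zero"
    by (rule zp_val_mul(1)) (use Z A B in simp_all)
  ultimately have "chi (- d) (zp_mul (zp_lin A t) (zp_lin B t)) = 1"
    using zp_norm_nonzero_chi(2)[OF Z(3,5)] zp_norm_zero_zero by fastforce
  then show ?thesis using chi_mul_eq_1_iff[OF _ _ A B neg_d_unit] Z by simp
qed

end

locale surface_coefficients = ramified_at_3 +
  fixes A B \<alpha> :: int
  assumes A_eq: "A = 3 * \<alpha>" and \<alpha>_mod: "\<alpha> mod 3 = (- d) mod 3" and B_dvd: "9 dvd B"
begin

lemma zp_val_chi_A: "zp_of_int A \<noteq> zp_zero" "zp_val (zp_of_int A) = 1" "chi (- d) (zp_of_int A) = 1"
proof -
  have "\<not> 3 dvd \<alpha>" using \<alpha>_mod neg_d_unit by (simp add: dvd_eq_mod_eq_0)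
  note A = zp_val_of_int[of A 1 \<alpha>, OF _ this]
  show "zp_of_int A \<noteq> zp_zero" "zp_val (zp_of_int A) = 1" using A A_eq by auto
  have "chi (- d) (zp_of_int A) = (((- d) mod 3) * (- d)) mod 3" unfolding chi_def using A A_eq \<alpha>_mod by simp
  also have "\<dots> = ((- d) * (- d)) mod 3" by (rule mod_mult_left_eq)
  also have "\<dots> = (d^2) mod 3" by (simp add: power2_eq_square)
  finally show "chi (- d) (zp_of_int A) = 1" using power2_mod3_eq_1[OF d_unit] by simp
qed

text \<open>Here the congruences on \<open>A\<close> and \<open>B\<close> enter: \<open>\<chi>(A t\<^sub>1) = \<chi>(t\<^sub>1)\<close> with \<open>v(A t\<^sub>1) = v(t\<^sub>1) + 1\<close>,
  so \<open>t\<^sub>0 + A t\<^sub>1\<close> has the character of \<open>t\<^sub>1\<close> unless \<open>v(t\<^sub>0) = v(t\<^sub>1) + 1\<close>; in that case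
  \<open>9 | B\<close> makes \<open>B t\<^sub>1\<close> negligible in \<open>t\<^sub>0 + B t\<^sub>1\<close>.\<close>

lemma chi_lin_eq_chi_t1_cases:
  assumes S: "in_S3 D A B t"
  shows "(zp_lin A t \<noteq> zp_zero \<and> chi (- d) (zp_lin A t) = chi (- d) (t 1)) \<or>
         (zp_lin B t \<noteq> zp_zero \<and> chi (- d) (zp_lin B t) = chi (- d) (t 1))"
proof -
  note Z = in_S3_coords[OF S] and t1 = in_S3_t1_nonzero[OF S]
  define a where "a = zp_mul (zp_of_int A) (t 1)"
  define b where "b = zp_mul (zp_of_int B) (t 1)"
  have aZ: "a \<in> Zp3" and bZ: "b \<in> Zp3" unfolding a_def b_def using Z by simp_all
  have a0: "a \<noteq> zp_zero" and val_a: "zp_val a = zp_val (t 1) + 1"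
    unfolding a_def using zp_val_mul[OF zp_of_int_in_Zp3 Z(2) zp_val_chi_A(1) t1] zp_val_chi_A(2) by auto
  have chi_a: "chi (- d) a = chi (- d) (t 1)" unfolding a_def
    using chi_mul[OF zp_of_int_in_Zp3 Z(2) zp_val_chi_A(1) t1, of "- d"] zp_val_chi_A(3)
      chi_cases[OF Z(2) t1 neg_d_unit] by auto
  have "(3::int)^2 dvd B" using B_dvd by simp
  then have dvd_b: "3^(zp_val (t 1) + 2) dvd b n" for n unfolding b_def by (rule zp_mul_of_int_dvd[OF Z(2)])
  have lin: "zp_lin A t = zp_add (t 0) a" "zp_lin B t = zp_add (t 0) b"
    by (simp_all add: zp_lin_def a_def b_def)
  show ?thesis
  proof (cases "t 0 = zp_zero")
    case True
    then show ?thesis using lin a0 chi_a aZ by simp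
  next
    case t0: False
    have chi_t0: "chi (- d) (t 0) = chi (- d) (t 1)" by (rule chi_t0_eq_chi_t1[OF S t0])
    consider "zp_val (t 0) \<le> zp_val (t 1)" | "zp_val (t 0) = zp_val (t 1) + 1"
      | "zp_val (t 1) + 1 < zp_val (t 0)" by linarith
    then show ?thesis
    proof cases
      case 1
      then have "3^Suc (zp_val (t 0)) dvd a n" for n
        using Zp3_dvd_if_le_val[OF aZ, of "Suc (zp_val (t 0))"] val_a by simp
      then show ?thesis using chi_add_higher[OF Z(1) aZ t0] chi_t0 lin by simp
    next
      case 2
      then have "3^Suc (zp_val (t 0)) dvd b n" for n using dvd_b[of n] by simp
      then show ?thesis using chi_add_higher[OF Z(1) bZ t0] chi_t0 lin by simp
    next
      case 3
      then have "3^Suc (zp_val a) dvd t 0 n" for n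
        using Zp3_dvd_if_le_val[OF Z(1), of "Suc (zp_val a)"] val_a by simp
      then show ?thesis using chi_add_higher[OF aZ Z(1) a0] chi_a lin by (simp add: zp_add_commute)
    qed
  qed
qed

lemma q_admissible_exists:
  assumes "in_S3 D A B t"
  shows "\<exists>q. q_admissible A B t q"
  using chi_lin_eq_chi_t1_cases[OF assms] in_S3_t1_nonzero[OF assms]
  unfolding q_admissible_def q_cands_eq by auto

lemma q_admissible_chi:
  assumes S: "in_S3 D A B t" and q: "q_admissible A B t q"
  shows "fst q \<in> Zp3" "snd q \<in> Zp3" "chi (- d) (fst q) = chi (- d) (t 1)" "chi (- d) (snd q) = chi (- d) (t 1)"
proof -
  note Z = in_S3_coords[OF S]
  have q_cases: "fst q \<in> {t 0, t 1}" "snd q \<in> {zp_lin A t, zp_lin B t}"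
    "fst q \<noteq> zp_zero" "snd q \<noteq> zp_zero"
    using q unfolding q_admissible_def q_cands_eq by auto
  then show "fst q \<in> Zp3" "snd q \<in> Zp3" using Z by auto
  show "chi (- d) (fst q) = chi (- d) (t 1)" using q_cases chi_t0_eq_chi_t1[OF S] by auto
  show "chi (- d) (snd q) = chi (- d) (t 1)"
    using q_cases chi_lin_eq_chi_t1_cases[OF S] chi_lin_eq[OF S] by auto
qed

lemma ev_alpha3_eq_0:
  assumes S: "in_S3 D A B t"
  shows "ev_alpha3 D A B t = 0"
proof -
  define q where "q = (SOME q. q_admissible A B t q)"
  have q: "q_admissible A B t q" unfolding q_def by (rule someI_ex[OF q_admissible_exists[OF S]])
  then have "fst q \<noteq> zp_zero" "snd q \<noteq> zp_zero" by (simp_all add: q_admissible_def)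
  then have "hilbert3 q (q3_of_zp (zp_of_int D)) = 1"
    using hilbert3_eq_1_if_chi_eq[of "fst q" "snd q"] q_admissible_chi[OF S q] by simp
  then show ?thesis unfolding ev_alpha3_def q_def[symmetric] by simp
qed

text \<open>The point \<open>(1 : 1 : 1 : 0 : s)\<close>: the second equation becomes \<open>d s\<^sup>2 = -(\<alpha> + B/3 + \<alpha> B)\<close>,
  whose right side is \<open>\<equiv> d (mod 3)\<close>, so Hensel's lemma gives \<open>s\<close>.\<close>

lemma in_S3_exists: "\<exists>t. in_S3 D A B t"
proof -
  obtain \<beta> where B_eq: "B = 9 * \<beta>" using B_dvd by blast
  define c where "c = - (\<alpha> + 3 * \<beta> + 9 * \<alpha> * \<beta>)"
  have "c mod 3 = (- \<alpha>) mod 3" unfolding c_def by (simp add: mod_eq_dvd_iff algebra_simps)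
  also have "\<dots> = d mod 3" using \<alpha>_mod by (metis minus_minus mod_minus_eq)
  finally obtain s where s: "s \<in> Zp3" "\<And>n. (d * s n ^ 2) mod 3^n = c mod 3^n"
    using hensel_square_root[OF d_unit, of "\<lambda>n. c"] by blast
  define t where "t = (\<lambda>i::nat. if i = 3 then zp_zero else if i = 4 then s else zp_of_int 1)"
  have "zp_mul (zp_lin A t) (zp_lin B t) = zp_norm D (t 2) (t 4)"
  proof
    fix n
    have "3^n dvd d * s n ^ 2 - c" using s(2)[of n] by (simp add: mod_eq_dvd_iff)
    then have "3^n dvd 3 * (d * s n ^ 2 - c)" by (rule dvd_mult)
    moreover have "3 * (d * s n ^ 2 - c) = (1 + A) * (1 + B) - (1 - D * (s n * s n))"
      unfolding c_def A_eq B_eq D_eq by (simp add: algebra_simps power2_eq_square)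
    ultimately have "((1 + A) * (1 + B)) mod 3^n = (1 - D * (s n * s n)) mod 3^n"
      by (simp add: mod_eq_dvd_iff)
    then show "zp_mul (zp_lin A t) (zp_lin B t) n = zp_norm D (t 2) (t 4) n"
      by (simp add: t_def zp_norm_def zp_lin_def zp_mul_def zp_add_def zp_neg_def zp_of_int_def mod_simps)
  qed
  moreover have "zp_mul (t 0) (t 1) = zp_norm D (t 2) (t 3)"
    by (simp add: t_def zp_norm_def)
  moreover have "\<forall>i\<le>4. t i \<in> Zp3" "t 0 \<noteq> zp_zero" using s(1) zp_one_nonzero by (simp_all add: t_def)
  ultimately have "in_S3 D A B t" unfolding in_S3_iff_norm by blast
  then show ?thesis by blast
qed

end

lemma surface_coefficients_if_mod_9:
  fixes D A B :: int
  assumes "squarefree D" "3 dvd D" "A mod 9 = (- D) mod 9" "B mod 9 = 0"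
  obtains d \<alpha> where "surface_coefficients D d A B \<alpha>"
proof -
  obtain d where D: "D = 3 * d" using assms(2) by blast
  have "\<not> 3 dvd d"
  proof
    assume "3 dvd d"
    then have "3 * 3 dvd D" unfolding D by (rule mult_dvd_mono[OF dvd_refl])
    then have "3^2 dvd D" by (simp add: power2_eq_square)
    then show False using squarefreeD[OF assms(1), of 3] by simp
  qed
  moreover obtain k where k: "A + D = 9 * k"
    using assms(3) by (metis dvdE mod_eq_dvd_iff diff_minus_eq_add)
  then have "A = 3 * (3 * k - d)" "(3 * k - d) mod 3 = (- d) mod 3" unfolding D by (simp_all add: mod_eq_dvd_iff)
  moreover have "9 dvd B" using assms(4) by (simp add: dvd_eq_mod_eq_0)
  ultimately show ?thesis
    using that[of d "3 * k - d"] D by (simp add: surface_coefficients_def ramified_at_3_def surface_coefficients_axioms_def)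
qed

theorem lemma5p2:
  fixes D A B :: int
  assumes "squarefree D"
    and "\<not> (\<exists>k::int. D = k^2)"
    and "3 dvd D"
    and "smooth_S A B"
    and "A mod 9 = (- D) mod 9"
    and "B mod 9 = 0"
  shows "(\<exists>t. in_S3 D A B t) \<and> (\<forall>t. in_S3 D A B t \<longrightarrow> ev_alpha3 D A B t = 0)"
proof -
  obtain d \<alpha> where "surface_coefficients D d A B \<alpha>"
    using surface_coefficients_if_mod_9[OF assms(1,3,5,6)] .
  then interpret surface_coefficients D d A B \<alpha> .
  show ?thesis using in_S3_exists ev_alpha3_eq_0 by blast
qed

end
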